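(* Assume the setting described in the context, assume that $\mu$ is absolutely continuous with respect to $\lambda$, and let $\theta\in\mathbb{R}^{\mathfrak{d}}$ satisfy $$\mathcal{L}(\theta)\Big(\sum_{i=1}^H|\mathfrak{v}^\theta_i|\,\mathbb{1}_{\{0\}}\Big(|\mathfrak{b}^\theta_i|+\sum_{j=1}^d|\mathfrak{w}^\theta_{i,j}|\Big)\Big)=0.$$ Then $\mathcal{L}$ is differentiable at $\theta$ and $(\nabla\mathcal{L})(\theta)=\mathcal{G}(\theta)$.
   Context: Setting: $d,H,\mathfrak{d}\in\mathbb{N}$ with $\mathfrak{d}=dH+2H+1$, $\mathscr{a}\in\mathbb{R}$, $\mathscr{b}\in(\mathscr{a},\infty)$, $f\in C([\mathscr{a},\mathscr{b}]^d,\mathbb{R})$. For $\theta=(\theta_1,\dots,\theta_{\mathfrak{d}})\in\mathbb{R}^{\mathfrak{d}}$, $i\in\{1,\dots,H\}$, $j\in\{1,\dots,d\}$ put $\mathfrak{w}^\theta_{i,j}=\theta_{(i-1)d+j}$, $\mathfrak{b}^\theta_i=\theta_{Hd+i}$, $\mathfrak{v}^\theta_i=\theta_{H(d+1)+i}$, $\mathfrak{c}^\theta=\theta_{\mathfrak{d}}$. Let $\mathfrak{R}_r\in C^1(\mathbb{R},\mathbb{R})$, $r\in\mathbb{N}$, satisfy for all $x\in\mathbb{R}$ that $\lim_{r\to\infty}\big(|\mathfrak{R}_r(x)-\max\{x,0\}|+|(\mathfrak{R}_r)'(x)-\mathbb{1}_{(0,\infty)}(x)|\big)=0$ and $\sup_{r\in\mathbb{N}}\sup_{y\in[-|x|,|x|]}|(\mathfrak{R}_r)'(y)|<\infty$.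 Let $\mu$ be a finite measure on $\mathcal{B}([\mathscr{a},\mathscr{b}]^d)$ and $\lambda$ the Lebesgue–Borel measure on $[\mathscr{a},\mathscr{b}]^d$. For $\theta\in\mathbb{R}^{\mathfrak{d}}$, $x\in\mathbb{R}^d$ let $\mathscr{N}^\theta(x)=\mathfrak{c}^\theta+\sum_{i=1}^H\mathfrak{v}^\theta_i\max\{\mathfrak{b}^\theta_i+\sum_{j=1}^d\mathfrak{w}^\theta_{i,j}x_j,0\}$, $\mathcal{L}(\theta)=\int_{[\mathscr{a},\mathscr{b}]^d}(f(y)-\mathscr{N}^\theta(y))^2\,\mu(\mathrm{d}y)$, and for $r\in\mathbb{N}$, $\mathfrak{L}_r(\theta)=\int_{[\mathscr{a},\mathscr{b}]^d}\big(f(y)-\mathfrak{c}^\theta-\sum_{i=1}^H\mathfrak{v}^\theta_i\,\mathfrak{R}_r(\mathfrak{b}^\theta_i+\sum_{j=1}^d\mathfrak{w}^\theta_{i,j}y_j)\big)^2\,\mu(\mathrm{d}y)$. Let $\mathcal{G}=(\mathcal{G}_1,\dots,\mathcal{G}_{\mathfrak{d}})\colon\mathbb{R}^{\mathfrak{d}}\to\mathbb{R}^{\mathfrak{d}}$ satisfy $\mathcal{G}(\theta)=\lim_{r\to\infty}(\nabla\mathfrak{L}_r)(\theta)$ for every $\theta$ for which this limit exists. $\mathbb{1}_A$ is the indicator function of $A$. *)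

theory Defs
  imports "HOL-Analysis.Analysis"
begin

text \<open>Parameter vectors live in real^'p with CARD('p) = d*H+2*H+1; the paper's
  coordinate theta_k (k = 1..dim) is theta $ ep k for a fixed bijection ep from
  {1..dim} onto 'p. Inputs live in real^'d with d = CARD('d); the paper's x_j
  (j = 1..d) is x $ ej j for a fixed bijection ej from {1..d} onto 'd.\<close>

definition wP :: "(nat \<Rightarrow> 'p) \<Rightarrow> nat \<Rightarrow> real^'p \<Rightarrow> nat \<Rightarrow> nat \<Rightarrow> real" where
  "wP ep d \<theta> i j = \<theta> $ ep ((i - 1) * d + j)"

definition bP :: "(nat \<Rightarrow> 'p) \<Rightarrow> nat \<Rightarrow> nat \<Rightarrow> real^'p \<Rightarrow> nat \<Rightarrow> real" where
  "bP ep d H \<theta> i = \<theta> $ ep (H * d + i)"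

definition vP :: "(nat \<Rightarrow> 'p) \<Rightarrow> nat \<Rightarrow> nat \<Rightarrow> real^'p \<Rightarrow> nat \<Rightarrow> real" where
  "vP ep d H \<theta> i = \<theta> $ ep (H * (d + 1) + i)"

definition cP :: "(nat \<Rightarrow> 'p) \<Rightarrow> nat \<Rightarrow> nat \<Rightarrow> real^'p \<Rightarrow> real" where
  "cP ep d H \<theta> = \<theta> $ ep (d * H + 2 * H + 1)"

definition netA :: "(real \<Rightarrow> real) \<Rightarrow> (nat \<Rightarrow> 'p) \<Rightarrow> (nat \<Rightarrow> 'd) \<Rightarrow> nat
    \<Rightarrow> real^'p \<Rightarrow> real^'d \<Rightarrow> real" where
  "netA act ep ej H \<theta> x =
     cP ep CARD('d) H \<theta> + (\<Sum>i = 1..H. vP ep CARD('d) H \<theta> i *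
        act (bP ep CARD('d) H \<theta> i + (\<Sum>j = 1..CARD('d). wP ep CARD('d) \<theta> i j * x $ ej j)))"

definition realNN :: "(nat \<Rightarrow> 'p) \<Rightarrow> (nat \<Rightarrow> 'd) \<Rightarrow> nat \<Rightarrow> real^'p \<Rightarrow> real^'d \<Rightarrow> real" where
  "realNN ep ej H \<theta> x = netA (\<lambda>t. max t 0) ep ej H \<theta> x"

definition cube :: "real \<Rightarrow> real \<Rightarrow> (real^'d) set" where
  "cube a b = cbox (\<chi> _. a) (\<chi> _. b)"

definition riskA :: "(real \<Rightarrow> real) \<Rightarrow> (nat \<Rightarrow> 'p) \<Rightarrow> (nat \<Rightarrow> 'd) \<Rightarrow> nat
    \<Rightarrow> (real^'d \<Rightarrow> real) \<Rightarrow> (real^'d) measure \<Rightarrow> real^'p \<Rightarrow> real" where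
  "riskA act ep ej H f \<mu> \<theta> = (\<integral>y. (f y - netA act ep ej H \<theta> y)^2 \<partial>\<mu>)"

end

(*
  For each smoothing R_r the risk is differentiated under the integral sign: on the cube the
  loss (f y - N_theta y)^2 is Lipschitz in theta near the given point, and its theta-derivative
  is bounded by a constant that depends on R_r only through bounds for R_r and R_r' on a fixed
  interval, which hold uniformly in r. Dominated convergence therefore carries the gradients of
  the smoothed risks to the integral of the formal ReLU loss gradient (R_r' replaced by the
  indicator of (0, oo)), and this identifies G theta.

  The ReLU risk is differentiated under the integral sign in the same way, because at theta its
  loss is differentiable in theta for mu-almost every input. If the risk vanishes, f agrees with
  the network mu-a.e., so the loss is quadratically small near theta. Otherwise every neuron with
  nonzero outer weight has a preactivation b_i + w_i . y that is not identically zero; its zero set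
  lies in a hyperplane, a Lebesgue null set and hence mu-null by absolute continuity, and off that
  set ReLU is differentiable at the preactivation.
*)

theory Submission
  imports Defs
begin

lemma bounded_linear_integral:
  fixes D :: "'b \<Rightarrow> 'a::real_normed_vector \<Rightarrow> real"
  assumes "finite_measure M"
    and D_meas: "\<And>h. (\<lambda>y. D y h) \<in> borel_measurable M"
    and D_lin: "\<And>y. y \<in> space M \<Longrightarrow> linear (D y)"
    and D_bound: "\<And>y h. y \<in> space M \<Longrightarrow> \<bar>D y h\<bar> \<le> B * norm h"
  shows "bounded_linear (\<lambda>h. \<integral>y. D y h \<partial>M)"
proof (rule bounded_linear_intro[where K="measure M (space M) * B"])
  interpret finite_measure M by fact
  have D_int: "integrable M (\<lambda>y. D y h)" for h
    by (rule integrable_const_bound[where B="B * norm h"]) (auto simp: D_bound D_meas)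
  show "(\<integral>y. D y (h1 + h2) \<partial>M) = (\<integral>y. D y h1 \<partial>M) + (\<integral>y. D y h2 \<partial>M)" for h1 h2
  proof -
    have "(\<integral>y. D y (h1 + h2) \<partial>M) = (\<integral>y. D y h1 + D y h2 \<partial>M)"
      by (rule Bochner_Integration.integral_cong) (auto simp: D_lin linear_add)
    then show ?thesis
      using D_int by simp
  qed
  show "(\<integral>y. D y (c *\<^sub>R h) \<partial>M) = c *\<^sub>R (\<integral>y. D y h \<partial>M)" for c h
  proof -
    have "(\<integral>y. D y (c *\<^sub>R h) \<partial>M) = (\<integral>y. c * D y h \<partial>M)"
      by (rule Bochner_Integration.integral_cong) (auto simp: D_lin linear_scale)
    then show ?thesis
      by simp
  qed
  show "norm (\<integral>y. D y h \<partial>M) \<le> norm h * (measure M (space M) * B)" for h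
  proof -
    have "norm (\<integral>y. D y h \<partial>M) \<le> (\<integral>y. norm (D y h) \<partial>M)"
      by (rule integral_norm_bound)
    also have "\<dots> \<le> (\<integral>y. B * norm h \<partial>M)"
      by (rule integral_mono) (auto simp: D_int D_bound)
    finally show ?thesis
      by (simp add: mult_ac)
  qed
qed

lemma tendsto_integral_difference_quotient:
  fixes \<Phi> :: "'a::real_normed_vector \<Rightarrow> 'b \<Rightarrow> real"
  assumes "finite_measure M"
    and \<Phi>_meas: "\<And>t. \<Phi> t \<in> borel_measurable M"
    and D_meas: "\<And>h. (\<lambda>y. D y h) \<in> borel_measurable M"
    and D_bound: "\<And>y h. y \<in> space M \<Longrightarrow> \<bar>D y h\<bar> \<le> B * norm h"
    and lip: "\<And>t y. t \<in> ball x \<delta> \<Longrightarrow> y \<in> space M \<Longrightarrow> \<bar>\<Phi> t y - \<Phi> x y\<bar> \<le> K * norm (t - x)"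
    and der: "AE y in M. ((\<lambda>t. \<Phi> t y) has_derivative D y) (at x)"
    and X: "X \<longlonglongrightarrow> x" "\<And>n. X n \<noteq> x" "\<And>n. X n \<in> ball x \<delta>"
  shows "(\<lambda>n. \<integral>y. (\<Phi> (X n) y - \<Phi> x y - D y (X n - x)) / norm (X n - x) \<partial>M) \<longlonglongrightarrow> 0"
proof -
  interpret finite_measure M by fact
  define Q where "Q n y = (\<Phi> (X n) y - \<Phi> x y - D y (X n - x)) / norm (X n - x)" for n y
  have "(\<lambda>n. \<integral>y. Q n y \<partial>M) \<longlonglongrightarrow> (\<integral>y. 0 \<partial>M)"
  proof (rule integral_dominated_convergence[where w="\<lambda>_. K + B"])
    show "Q n \<in> borel_measurable M" for n
      unfolding Q_def using \<Phi>_meas D_meas by measurable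
    show "AE y in M. norm (Q n y) \<le> K + B" for n
    proof (rule AE_I2)
      fix y assume y: "y \<in> space M"
      have "\<bar>\<Phi> (X n) y - \<Phi> x y - D y (X n - x)\<bar> \<le> K * norm (X n - x) + B * norm (X n - x)"
        using lip[OF X(3)[of n] y] D_bound[OF y, of "X n - x"] by linarith
      then show "norm (Q n y) \<le> K + B"
        using X(2)[of n] by (simp add: Q_def divide_le_eq distrib_right)
    qed
    show "AE y in M. (\<lambda>n. Q n y) \<longlonglongrightarrow> 0"
      using der
    proof eventually_elim
      case (elim y)
      then have "((\<lambda>t. norm (\<Phi> t y - \<Phi> x y - D y (t - x)) / norm (t - x)) \<longlongrightarrow> 0) (at x)"
        by (simp add: has_derivative_iff_norm)
      then have "(\<lambda>n. \<bar>Q n y\<bar>) \<longlonglongrightarrow> 0"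
        using X(1,2) unfolding tendsto_at_iff_sequentially comp_def by (simp add: Q_def)
      then show ?case
        by (rule tendsto_rabs_zero_cancel)
    qed
  qed simp_all
  then show ?thesis
    by (simp add: Q_def)
qed

lemma has_derivative_integral_AE:
  fixes \<Phi> :: "'a::real_normed_vector \<Rightarrow> 'b \<Rightarrow> real"
  assumes fin: "finite_measure M"
    and \<Phi>_meas: "\<And>t. \<Phi> t \<in> borel_measurable M"
    and \<Phi>_int: "integrable M (\<Phi> x)"
    and D_meas: "\<And>h. (\<lambda>y. D y h) \<in> borel_measurable M"
    and D_lin: "\<And>y. y \<in> space M \<Longrightarrow> linear (D y)"
    and D_bound: "\<And>y h. y \<in> space M \<Longrightarrow> \<bar>D y h\<bar> \<le> B * norm h"
    and "\<delta> > 0"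
    and lip: "\<And>t y. t \<in> ball x \<delta> \<Longrightarrow> y \<in> space M \<Longrightarrow> \<bar>\<Phi> t y - \<Phi> x y\<bar> \<le> K * norm (t - x)"
    and der: "AE y in M. ((\<lambda>t. \<Phi> t y) has_derivative D y) (at x)"
  shows "((\<lambda>t. \<integral>y. \<Phi> t y \<partial>M) has_derivative (\<lambda>h. \<integral>y. D y h \<partial>M)) (at x)"
  unfolding has_derivative_iff_norm
proof (intro conjI bounded_linear_integral[OF fin D_meas D_lin D_bound])
  interpret finite_measure M by fact
  have D_int: "integrable M (\<lambda>y. D y h)" for h
    by (rule integrable_const_bound[where B="B * norm h"]) (auto simp: D_bound D_meas)
  have \<Phi>_int_ball: "integrable M (\<Phi> t)" if "t \<in> ball x \<delta>" for t
  proof -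
    have "integrable M (\<lambda>y. \<Phi> x y + (\<Phi> t y - \<Phi> x y))"
      by (intro Bochner_Integration.integrable_add \<Phi>_int integrable_const_bound[where B="K * norm (t - x)"])
        (use lip[OF that] \<Phi>_meas in auto)
    then show ?thesis
      by simp
  qed
  show "((\<lambda>t. norm ((\<integral>y. \<Phi> t y \<partial>M) - (\<integral>y. \<Phi> x y \<partial>M) - (\<integral>y. D y (t - x) \<partial>M)) / norm (t - x))
      \<longlongrightarrow> 0) (at x)"
    unfolding tendsto_at_iff_sequentially comp_def
  proof (intro allI impI)
    fix X assume X_ne: "\<forall>n. X n \<in> UNIV - {x}" and X_lim: "X \<longlonglongrightarrow> x"
    obtain N where N: "\<And>n. n \<ge> N \<Longrightarrow> X n \<in> ball x \<delta>"
      using X_lim \<open>\<delta> > 0\<close> unfolding lim_sequentially by (auto simp: dist_commute)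
    have "(\<lambda>n. \<integral>y. (\<Phi> (X (n + N)) y - \<Phi> x y - D y (X (n + N) - x)) / norm (X (n + N) - x) \<partial>M)
        \<longlonglongrightarrow> 0"
      using X_ne N LIMSEQ_ignore_initial_segment[OF X_lim, of N]
      by (intro tendsto_integral_difference_quotient[OF fin \<Phi>_meas D_meas D_bound lip der]) auto
    then have "(\<lambda>n. ((\<integral>y. \<Phi> (X (n + N)) y \<partial>M) - (\<integral>y. \<Phi> x y \<partial>M) - (\<integral>y. D y (X (n + N) - x) \<partial>M))
        / norm (X (n + N) - x)) \<longlonglongrightarrow> 0"
      using \<Phi>_int_ball[OF N] \<Phi>_int D_int by simp
    then have "(\<lambda>n. norm ((\<integral>y. \<Phi> (X (n + N)) y \<partial>M) - (\<integral>y. \<Phi> x y \<partial>M) - (\<integral>y. D y (X (n + N) - x) \<partial>M))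
        / norm (X (n + N) - x)) \<longlonglongrightarrow> 0"
      using tendsto_rabs_zero by fastforce
    then show "(\<lambda>n. norm ((\<integral>y. \<Phi> (X n) y \<partial>M) - (\<integral>y. \<Phi> x y \<partial>M) - (\<integral>y. D y (X n - x) \<partial>M))
        / norm (X n - x)) \<longlonglongrightarrow> 0"
      by (rule LIMSEQ_offset)
  qed
qed

lemma has_derivative_mult_vanishing:
  fixes u :: "'a::real_normed_vector \<Rightarrow> real"
  assumes u: "bounded_linear u" and u0: "u x = 0" and m: "isCont m x"
  shows "((\<lambda>t. u t * m t) has_derivative (\<lambda>h. u h * m x)) (at x)"
  unfolding has_derivative_at
proof
  show "bounded_linear (\<lambda>h. u h * m x)"
    using u by (rule bounded_linear_compose[OF bounded_linear_mult_left])
  obtain K where K: "\<And>h. norm (u h) \<le> norm h * K" "K > 0"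
    using bounded_linear.pos_bounded[OF u] by blast
  have u_shift: "u (x + h) = u h" for h
    using u0 linear_add[OF bounded_linear.linear[OF u]] by simp
  show "(\<lambda>h. norm (u (x + h) * m (x + h) - u x * m x - u h * m x) / norm h) \<midarrow>0\<rightarrow> 0"
  proof (rule Lim_null_comparison)
    show "\<forall>\<^sub>F h in at 0. norm (norm (u (x + h) * m (x + h) - u x * m x - u h * m x) / norm h)
        \<le> K * \<bar>m (x + h) - m x\<bar>"
    proof (intro always_eventually allI)
      fix h :: 'a
      have "u (x + h) * m (x + h) - u x * m x - u h * m x = u h * (m (x + h) - m x)"
        by (simp only: u_shift u0) (simp add: algebra_simps)
      then have "norm (u (x + h) * m (x + h) - u x * m x - u h * m x) = \<bar>u h\<bar> * \<bar>m (x + h) - m x\<bar>"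
        by (simp add: abs_mult)
      also have "\<dots> \<le> norm h * K * \<bar>m (x + h) - m x\<bar>"
        using K(1)[of h] by (intro mult_right_mono) auto
      finally show "norm (norm (u (x + h) * m (x + h) - u x * m x - u h * m x) / norm h)
          \<le> K * \<bar>m (x + h) - m x\<bar>"
        by (cases "h = 0") (auto simp: divide_le_eq algebra_simps)
    qed
    have "(\<lambda>h. m (x + h)) \<midarrow>0\<rightarrow> m x"
      using m by (simp add: isCont_iff)
    then have "(\<lambda>h. K * \<bar>m (x + h) - m x\<bar>) \<midarrow>0\<rightarrow> K * \<bar>m x - m x\<bar>"
      by (intro tendsto_intros)
    then show "(\<lambda>h. K * \<bar>m (x + h) - m x\<bar>) \<midarrow>0\<rightarrow> 0"
      by simp
  qed
qed

lemma has_derivative_zero_if_quadratic_bound: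
  fixes F :: "'a::real_normed_vector \<Rightarrow> real"
  assumes "\<delta> > 0" and bound: "\<And>t. t \<in> ball x \<delta> \<Longrightarrow> \<bar>F t\<bar> \<le> K * (norm (t - x))\<^sup>2"
  shows "(F has_derivative (\<lambda>h. 0)) (at x)"
  unfolding has_derivative_at
proof
  have F0: "F x = 0"
    using bound[of x] \<open>\<delta> > 0\<close> by simp
  show "(\<lambda>h. norm (F (x + h) - F x - 0) / norm h) \<midarrow>0\<rightarrow> 0"
  proof (rule Lim_null_comparison)
    show "\<forall>\<^sub>F h in at 0. norm (norm (F (x + h) - F x - 0) / norm h) \<le> K * norm h"
      unfolding eventually_at
    proof (intro exI[of _ \<delta>] conjI \<open>\<delta> > 0\<close> ballI impI)
      fix h :: 'a assume h: "h \<noteq> 0 \<and> dist h 0 < \<delta>"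
      then have "\<bar>F (x + h)\<bar> \<le> K * (norm h)\<^sup>2"
        using bound[of "x + h"] by (simp add: dist_norm)
      then show "norm (norm (F (x + h) - F x - 0) / norm h) \<le> K * norm h"
        using h by (simp add: F0 divide_le_eq power2_eq_square mult.assoc)
    qed
    have "(\<lambda>h::'a. norm h) \<midarrow>0\<rightarrow> 0"
      using tendsto_norm[OF tendsto_ident_at[of "0::'a" UNIV]] by simp
    then show "(\<lambda>h::'a. K * norm h) \<midarrow>0\<rightarrow> 0"
      by (rule tendsto_mult_right_zero)
  qed
qed simp

lemma relu_has_real_derivative:
  assumes "z \<noteq> 0"
  shows "((\<lambda>s::real. max s 0) has_real_derivative indicator {0<..} z) (at z)"
proof (cases "z > 0")
  case True
  have "((\<lambda>s::real. max s 0) has_real_derivative 1) (at z)"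
    by (rule has_field_derivative_transform_within_open[OF DERIV_ident, where S="{0<..}"])
      (use True in auto)
  then show ?thesis
    using True by simp
next
  case False
  then have "z < 0"
    using assms by simp
  have "((\<lambda>s::real. max s 0) has_real_derivative 0) (at z)"
    by (rule has_field_derivative_transform_within_open[OF DERIV_const, where S="{..<0}"])
      (use \<open>z < 0\<close> in auto)
  then show ?thesis
    using \<open>z < 0\<close> by simp
qed

lemma linear_eq_inner_axis:
  fixes L :: "real^'n \<Rightarrow> real"
  assumes "linear L"
  shows "L h = (\<chi> k. L (axis k 1)) \<bullet> h"
proof -
  have "L h = L (\<Sum>k\<in>UNIV. h $ k *\<^sub>R axis k 1)"
    using basis_expansion[of h] by (simp add: scalar_mult_eq_scaleR)
  also have "\<dots> = (\<Sum>k\<in>UNIV. h $ k * L (axis k 1))"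
    by (simp add: linear_sum[OF assms] linear_scale[OF assms])
  finally show ?thesis
    by (simp add: inner_vec_def mult.commute)
qed

lemma AE_not_in_hyperplane:
  fixes \<mu> :: "'a::euclidean_space measure"
  assumes sets_\<mu>: "sets \<mu> = sets (restrict_space borel S)" and "S \<in> sets borel"
    and ac: "absolutely_continuous (restrict_space lborel S) \<mu>"
    and "u \<noteq> 0 \<or> c \<noteq> 0"
  shows "AE y in \<mu>. u \<bullet> y \<noteq> c"
proof -
  define P where "P = {y. u \<bullet> y = c}"
  have "negligible P"
    unfolding P_def by (rule negligible_hyperplane[OF assms(4)])
  moreover have "P \<in> sets borel"
    unfolding P_def by (intro borel_closed closed_hyperplane)
  ultimately have "P \<in> null_sets lborel"
    using null_sets_completion_iff[of P lborel] by (simp add: negligible_iff_null_sets)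
  then have "P \<inter> S \<in> null_sets (restrict_space lborel S)"
    using \<open>S \<in> sets borel\<close> by (subst null_sets_restrict_space) (auto intro: null_set_Int2)
  then have "P \<inter> S \<in> null_sets \<mu>"
    using ac unfolding absolutely_continuous_def by blast
  moreover have "space \<mu> = S"
    using sets_eq_imp_space_eq[OF sets_\<mu>] by (simp add: space_restrict_space)
  ultimately show ?thesis
    by (intro AE_I'[of "P \<inter> S"]) (auto simp: P_def)
qed

lemma tendsto_of_sum_abs_tendsto_0:
  fixes X Y :: "'a \<Rightarrow> real"
  assumes "((\<lambda>r. \<bar>X r - x\<bar> + \<bar>Y r - y\<bar>) \<longlongrightarrow> 0) F"
  shows "(X \<longlongrightarrow> x) F" and "(Y \<longlongrightarrow> y) F"
proof -
  have "((\<lambda>r. X r - x) \<longlongrightarrow> 0) F" "((\<lambda>r. Y r - y) \<longlongrightarrow> 0) F"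
    by (rule Lim_null_comparison[OF _ assms]; simp)+
  then show "(X \<longlongrightarrow> x) F" "(Y \<longlongrightarrow> y) F"
    by (simp_all add: LIM_zero_iff)
qed

lemma abs_add_sum_le:
  fixes x n K :: real
  assumes "\<bar>x\<bar> \<le> n" and "\<And>i. i \<in> {1..H} \<Longrightarrow> \<bar>T i\<bar> \<le> K * n"
  shows "\<bar>x + (\<Sum>i = 1..H. T i)\<bar> \<le> (1 + real H * K) * n"
proof -
  have "\<bar>x + (\<Sum>i = 1..H. T i)\<bar> \<le> \<bar>x\<bar> + (\<Sum>i = 1..H. \<bar>T i\<bar>)"
    by (rule order_trans[OF abs_triangle_ineq add_left_mono[OF sum_abs]])
  also have "\<dots> \<le> n + (\<Sum>i = 1..H. K * n)"
    using assms by (intro add_mono sum_mono) auto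
  finally show ?thesis
    by (simp add: algebra_simps)
qed

lemma abs_square_diff_le:
  fixes f u w :: real
  shows "\<bar>(f - u)\<^sup>2 - (f - w)\<^sup>2\<bar> \<le> \<bar>u - w\<bar> * (2 * \<bar>f\<bar> + \<bar>u\<bar> + \<bar>w\<bar>)"
proof -
  have "(f - u)\<^sup>2 - (f - w)\<^sup>2 = (w - u) * (2 * f - u - w)"
    by (simp add: power2_eq_square algebra_simps)
  then have "\<bar>(f - u)\<^sup>2 - (f - w)\<^sup>2\<bar> = \<bar>u - w\<bar> * \<bar>2 * f - u - w\<bar>"
    by (simp add: abs_mult abs_minus_commute)
  also have "\<dots> \<le> \<bar>u - w\<bar> * (2 * \<bar>f\<bar> + \<bar>u\<bar> + \<bar>w\<bar>)"
    by (intro mult_left_mono) auto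
  finally show ?thesis .
qed

lemma bounded_on_cube:
  assumes "continuous_on (cube a b) g"
  obtains B where "\<And>y. y \<in> cube a b \<Longrightarrow> \<bar>g y :: real\<bar> \<le> B"
proof -
  have "compact (g ` cube a b)"
    using assms by (intro compact_continuous_image) (simp_all add: cube_def)
  then obtain B where "\<forall>y\<in>cube a b. \<bar>g y\<bar> \<le> B"
    by (auto dest!: compact_imp_bounded simp: bounded_iff)
  then show ?thesis
    using that by blast
qed

lemma abs_component_le_cube:
  assumes "y \<in> cube a b"
  shows "\<bar>y $ k\<bar> \<le> \<bar>a\<bar> + \<bar>b\<bar>"
proof -
  have "a \<le> y $ k" "y $ k \<le> b"
    using assms by (auto simp: cube_def mem_box_cart)
  then show ?thesis
    by linarith
qed

definition bounded_activation :: "real \<Rightarrow> real \<Rightarrow> real \<Rightarrow> (real \<Rightarrow> real) \<Rightarrow> (real \<Rightarrow> real) \<Rightarrow> bool" where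
  "bounded_activation M A C act act' \<longleftrightarrow>
     (\<forall>s u. \<bar>s\<bar> \<le> M \<longrightarrow> \<bar>u\<bar> \<le> M \<longrightarrow> \<bar>act s - act u\<bar> \<le> C * \<bar>s - u\<bar>) \<and>
     (\<forall>s. \<bar>s\<bar> \<le> M \<longrightarrow> \<bar>act s\<bar> \<le> A \<and> \<bar>act' s\<bar> \<le> C)"

lemma bounded_activationD:
  assumes "bounded_activation M A C act act'" "\<bar>s\<bar> \<le> M"
  shows "\<bar>act s\<bar> \<le> A" "\<bar>act' s\<bar> \<le> C"
    and "\<bar>u\<bar> \<le> M \<Longrightarrow> \<bar>act s - act u\<bar> \<le> C * \<bar>s - u\<bar>"
  using assms by (auto simp: bounded_activation_def)

lemma bounded_activation_nonneg:
  assumes "bounded_activation M A C act act'" "0 \<le> M"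
  shows "0 \<le> A" "0 \<le> C"
  using bounded_activationD[OF assms(1), of 0] assms(2) by auto

lemma bounded_activation_relu: "bounded_activation M M 1 (\<lambda>s. max s 0) (indicator {0<..})"
  unfolding bounded_activation_def by (auto simp: indicator_def max_def abs_if)

lemma bounded_activation_family:
  fixes act act' :: "nat \<Rightarrow> real \<Rightarrow> real"
  assumes deriv: "\<And>r s. (act r has_real_derivative act' r s) (at s)"
    and deriv_bound: "\<And>r s. \<bar>s\<bar> \<le> M \<Longrightarrow> \<bar>act' r s\<bar> \<le> C"
    and "convergent (\<lambda>r. act r 0)"
  shows "\<exists>A. \<forall>r. bounded_activation M A C (act r) (act' r)"
proof -
  obtain K where K: "\<And>r. \<bar>act r 0\<bar> \<le> K"
    using convergent_imp_Bseq[OF assms(3)] by (auto simp: Bseq_def)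
  have lip: "\<bar>act r s - act r u\<bar> \<le> C * \<bar>s - u\<bar>" if "\<bar>s\<bar> \<le> M" "\<bar>u\<bar> \<le> M" for r s u
  proof -
    have "norm (act r s - act r u) \<le> C * norm (s - u)"
    proof (rule field_differentiable_bound[of "{-M..M}"])
      show "norm (act' r z) \<le> C" if "z \<in> {-M..M}" for z
        using that deriv_bound[of z r] by auto
    qed (use that in \<open>auto intro: has_field_derivative_at_within deriv\<close>)
    then show ?thesis
      by simp
  qed
  have "\<bar>act r s\<bar> \<le> K + \<bar>C\<bar> * \<bar>M\<bar>" if "\<bar>s\<bar> \<le> M" for r s
  proof -
    have "\<bar>act r s - act r 0\<bar> \<le> C * \<bar>s - 0\<bar>"
      using that by (intro lip) auto
    also have "\<dots> \<le> \<bar>C\<bar> * \<bar>s\<bar>"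
      by (simp add: abs_mult[symmetric])
    also have "\<dots> \<le> \<bar>C\<bar> * \<bar>M\<bar>"
      using that by (intro mult_left_mono) auto
    finally show ?thesis
      using K[of r] by linarith
  qed
  then show ?thesis
    using lip deriv_bound by (auto simp: bounded_activation_def)
qed

locale shallow_net =
  fixes ep :: "nat \<Rightarrow> 'p::finite" and ej :: "nat \<Rightarrow> 'd::finite" and H :: nat
begin

definition preact :: "real^'p \<Rightarrow> nat \<Rightarrow> real^'d \<Rightarrow> real" where
  "preact \<theta> i y = bP ep CARD('d) H \<theta> i + (\<Sum>j = 1..CARD('d). wP ep CARD('d) \<theta> i j * y $ ej j)"

definition net_deriv :: "(real \<Rightarrow> real) \<Rightarrow> (real \<Rightarrow> real) \<Rightarrow> real^'p \<Rightarrow> real^'d \<Rightarrow> real^'p \<Rightarrow> real" where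
  "net_deriv act act' \<theta> y h = cP ep CARD('d) H h +
     (\<Sum>i = 1..H. vP ep CARD('d) H h i * act (preact \<theta> i y)
                 + vP ep CARD('d) H \<theta> i * act' (preact \<theta> i y) * preact h i y)"

lemma netA_eq:
  "netA act ep ej H \<theta> y = cP ep CARD('d) H \<theta> + (\<Sum>i = 1..H. vP ep CARD('d) H \<theta> i * act (preact \<theta> i y))"
  unfolding netA_def preact_def ..

lemma bounded_linear_cP: "bounded_linear (\<lambda>\<theta>. cP ep n H \<theta>)"
  and bounded_linear_vP: "bounded_linear (\<lambda>\<theta>. vP ep n H \<theta> i)"
  and bounded_linear_preact: "bounded_linear (\<lambda>\<theta>. preact \<theta> i y)"
  unfolding cP_def vP_def preact_def bP_def wP_def
  by (intro bounded_linear_add bounded_linear_sum bounded_linear_vec_nth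
      bounded_linear_compose[OF bounded_linear_mult_left])+

lemma cP_diff: "cP ep n H (t - \<theta>) = cP ep n H t - cP ep n H \<theta>"
  and vP_diff: "vP ep n H (t - \<theta>) i = vP ep n H t i - vP ep n H \<theta> i"
  and preact_diff: "preact (t - \<theta>) i y = preact t i y - preact \<theta> i y"
  by (simp_all add: cP_def vP_def preact_def bP_def wP_def sum_subtractf algebra_simps)

lemma bounded_linear_net_deriv: "bounded_linear (net_deriv act act' \<theta> y)"
  unfolding net_deriv_def[abs_def]
  by (intro bounded_linear_add bounded_linear_sum bounded_linear_cP
      bounded_linear_compose[OF bounded_linear_mult_left bounded_linear_vP]
      bounded_linear_compose[OF bounded_linear_mult_right bounded_linear_preact])

lemma abs_parameter_le:
  "\<bar>cP ep n H h\<bar> \<le> norm h" "\<bar>vP ep n H h i\<bar> \<le> norm h"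
  "\<bar>bP ep n H h i\<bar> \<le> norm h" "\<bar>wP ep n h i j\<bar> \<le> norm h"
  by (simp_all add: cP_def vP_def bP_def wP_def component_le_norm_cart)

lemma abs_preact_le:
  fixes Y :: real
  assumes "\<And>k. \<bar>y $ k\<bar> \<le> Y"
  shows "\<bar>preact h i y\<bar> \<le> (1 + real CARD('d) * Y) * norm h"
proof -
  have "\<bar>preact h i y\<bar> \<le> \<bar>bP ep CARD('d) H h i\<bar> + (\<Sum>j = 1..CARD('d). \<bar>wP ep CARD('d) h i j\<bar> * \<bar>y $ ej j\<bar>)"
    unfolding preact_def abs_mult[symmetric]
    by (rule order_trans[OF abs_triangle_ineq add_left_mono[OF sum_abs]])
  also have "\<dots> \<le> norm h + (\<Sum>j = 1..CARD('d). norm h * Y)"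
    by (intro add_mono sum_mono mult_mono abs_parameter_le assms) auto
  finally show ?thesis
    by (simp add: algebra_simps)
qed

lemma neuron_has_derivative:
  assumes "(act has_real_derivative act' (preact \<theta> i y)) (at (preact \<theta> i y))
      \<or> vP ep CARD('d) H \<theta> i = 0 \<and> isCont act (preact \<theta> i y)"
  shows "((\<lambda>t. vP ep CARD('d) H t i * act (preact t i y)) has_derivative
     (\<lambda>h. vP ep CARD('d) H h i * act (preact \<theta> i y)
          + vP ep CARD('d) H \<theta> i * act' (preact \<theta> i y) * preact h i y)) (at \<theta>)"
  using assms
proof
  assume "(act has_real_derivative act' (preact \<theta> i y)) (at (preact \<theta> i y))"
  then have "((\<lambda>t. act (preact t i y)) has_derivative (\<lambda>h. act' (preact \<theta> i y) * preact h i y)) (at \<theta>)"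
    by (intro has_derivative_compose[OF bounded_linear_imp_has_derivative[OF bounded_linear_preact]]
        has_field_derivative_imp_has_derivative)
  from has_derivative_mult[OF bounded_linear_imp_has_derivative[OF bounded_linear_vP] this]
  show ?thesis
    by (simp add: algebra_simps)
next
  assume vanishing: "vP ep CARD('d) H \<theta> i = 0 \<and> isCont act (preact \<theta> i y)"
  then have "isCont (\<lambda>t. act (preact t i y)) \<theta>"
    by (intro continuous_at_compose[OF linear_continuous_at[OF bounded_linear_preact], unfolded o_def]) simp
  with vanishing have "((\<lambda>t. vP ep CARD('d) H t i * act (preact t i y)) has_derivative
      (\<lambda>h. vP ep CARD('d) H h i * act (preact \<theta> i y))) (at \<theta>)"
    by (intro has_derivative_mult_vanishing[OF bounded_linear_vP]) auto
  with vanishing show ?thesis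
    by simp
qed

lemma netA_has_derivative:
  assumes "\<And>i. i \<in> {1..H} \<Longrightarrow> (act has_real_derivative act' (preact \<theta> i y)) (at (preact \<theta> i y))
      \<or> vP ep CARD('d) H \<theta> i = 0 \<and> isCont act (preact \<theta> i y)"
  shows "((\<lambda>t. netA act ep ej H t y) has_derivative net_deriv act act' \<theta> y) (at \<theta>)"
  unfolding netA_eq net_deriv_def[abs_def]
  by (intro has_derivative_add has_derivative_sum neuron_has_derivative assms
      bounded_linear_imp_has_derivative[OF bounded_linear_cP])

lemma abs_netA_le:
  assumes act: "bounded_activation M A C act act'" and t: "\<And>i. \<bar>preact t i y\<bar> \<le> M"
  shows "\<bar>netA act ep ej H t y\<bar> \<le> (1 + real H * A) * norm t"
  unfolding netA_eq
proof (rule abs_add_sum_le[OF abs_parameter_le(1)])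
  fix i
  have "\<bar>vP ep CARD('d) H t i\<bar> * \<bar>act (preact t i y)\<bar> \<le> norm t * A"
    by (intro mult_mono abs_parameter_le bounded_activationD(1)[OF act t]) auto
  then show "\<bar>vP ep CARD('d) H t i * act (preact t i y)\<bar> \<le> A * norm t"
    by (simp add: abs_mult mult.commute)
qed

lemma neuron_lipschitz:
  assumes act: "bounded_activation M A C act act'"
    and t: "\<bar>preact t i y\<bar> \<le> M" and \<theta>: "\<bar>preact \<theta> i y\<bar> \<le> M"
    and Z: "\<bar>preact (t - \<theta>) i y\<bar> \<le> Z * norm (t - \<theta>)"
  shows "\<bar>vP ep CARD('d) H t i * act (preact t i y) - vP ep CARD('d) H \<theta> i * act (preact \<theta> i y)\<bar>
    \<le> (A + norm \<theta> * C * Z) * norm (t - \<theta>)"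
proof -
  have "0 \<le> C"
    using bounded_activation_nonneg[OF act] t by linarith
  have "vP ep CARD('d) H t i * act (preact t i y) - vP ep CARD('d) H \<theta> i * act (preact \<theta> i y)
      = vP ep CARD('d) H (t - \<theta>) i * act (preact t i y)
        + vP ep CARD('d) H \<theta> i * (act (preact t i y) - act (preact \<theta> i y))"
    by (simp add: vP_diff algebra_simps)
  then have "\<bar>vP ep CARD('d) H t i * act (preact t i y) - vP ep CARD('d) H \<theta> i * act (preact \<theta> i y)\<bar>
      \<le> \<bar>vP ep CARD('d) H (t - \<theta>) i\<bar> * \<bar>act (preact t i y)\<bar>
        + \<bar>vP ep CARD('d) H \<theta> i\<bar> * \<bar>act (preact t i y) - act (preact \<theta> i y)\<bar>"
    by (simp add: abs_mult[symmetric] abs_triangle_ineq)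
  also have "\<dots> \<le> norm (t - \<theta>) * A + norm \<theta> * (C * (Z * norm (t - \<theta>)))"
  proof (rule add_mono)
    show "\<bar>vP ep CARD('d) H (t - \<theta>) i\<bar> * \<bar>act (preact t i y)\<bar> \<le> norm (t - \<theta>) * A"
      by (intro mult_mono abs_parameter_le bounded_activationD(1)[OF act t]) auto
    have "\<bar>act (preact t i y) - act (preact \<theta> i y)\<bar> \<le> C * \<bar>preact (t - \<theta>) i y\<bar>"
      using bounded_activationD(3)[OF act t \<theta>] by (simp add: preact_diff)
    also have "\<dots> \<le> C * (Z * norm (t - \<theta>))"
      using Z \<open>0 \<le> C\<close> by (rule mult_left_mono)
    finally show "\<bar>vP ep CARD('d) H \<theta> i\<bar> * \<bar>act (preact t i y) - act (preact \<theta> i y)\<bar>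
        \<le> norm \<theta> * (C * (Z * norm (t - \<theta>)))"
      by (intro mult_mono abs_parameter_le) auto
  qed
  also have "\<dots> = (A + norm \<theta> * C * Z) * norm (t - \<theta>)"
    by (simp add: algebra_simps)
  finally show ?thesis .
qed

lemma netA_lipschitz:
  assumes act: "bounded_activation M A C act act'"
    and t: "\<And>i. \<bar>preact t i y\<bar> \<le> M" and \<theta>: "\<And>i. \<bar>preact \<theta> i y\<bar> \<le> M"
    and Z: "\<And>h i. \<bar>preact h i y\<bar> \<le> Z * norm h"
  shows "\<bar>netA act ep ej H t y - netA act ep ej H \<theta> y\<bar> \<le> (1 + real H * (A + norm \<theta> * C * Z)) * norm (t - \<theta>)"
proof -
  have "netA act ep ej H t y - netA act ep ej H \<theta> y = cP ep CARD('d) H (t - \<theta>) +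
      (\<Sum>i = 1..H. vP ep CARD('d) H t i * act (preact t i y) - vP ep CARD('d) H \<theta> i * act (preact \<theta> i y))"
    by (simp add: netA_eq cP_diff sum_subtractf)
  also have "\<bar>\<dots>\<bar> \<le> (1 + real H * (A + norm \<theta> * C * Z)) * norm (t - \<theta>)"
    by (intro abs_add_sum_le abs_parameter_le neuron_lipschitz[OF act t \<theta> Z])
  finally show ?thesis .
qed

lemma abs_net_deriv_le:
  assumes act: "bounded_activation M A C act act'"
    and \<theta>: "\<And>i. \<bar>preact \<theta> i y\<bar> \<le> M" and Z: "\<And>h i. \<bar>preact h i y\<bar> \<le> Z * norm h"
  shows "\<bar>net_deriv act act' \<theta> y h\<bar> \<le> (1 + real H * (A + norm \<theta> * C * Z)) * norm h"
  unfolding net_deriv_def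
proof (rule abs_add_sum_le[OF abs_parameter_le(1)])
  fix i
  have "0 \<le> C"
    using bounded_activation_nonneg[OF act] \<theta>[of 0] by linarith
  have "\<bar>vP ep CARD('d) H h i * act (preact \<theta> i y) + vP ep CARD('d) H \<theta> i * act' (preact \<theta> i y) * preact h i y\<bar>
      \<le> \<bar>vP ep CARD('d) H h i\<bar> * \<bar>act (preact \<theta> i y)\<bar>
        + \<bar>vP ep CARD('d) H \<theta> i\<bar> * \<bar>act' (preact \<theta> i y)\<bar> * \<bar>preact h i y\<bar>"
    by (simp add: abs_mult[symmetric] abs_triangle_ineq)
  also have "\<dots> \<le> norm h * A + norm \<theta> * C * (Z * norm h)"
    using \<open>0 \<le> C\<close>
    by (intro add_mono mult_mono abs_parameter_le bounded_activationD(1,2)[OF act \<theta>] Z) auto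
  also have "\<dots> = (A + norm \<theta> * C * Z) * norm h"
    by (simp add: algebra_simps)
  finally show "\<bar>vP ep CARD('d) H h i * act (preact \<theta> i y)
      + vP ep CARD('d) H \<theta> i * act' (preact \<theta> i y) * preact h i y\<bar> \<le> (A + norm \<theta> * C * Z) * norm h" .
qed

lemma preact_eq_inner:
  assumes ej: "bij_betw ej {1..CARD('d)} UNIV"
  shows "preact \<theta> i y = bP ep CARD('d) H \<theta> i + (\<chi> k. wP ep CARD('d) \<theta> i (inv_into {1..CARD('d)} ej k)) \<bullet> y"
proof -
  have "(\<Sum>j = 1..CARD('d). wP ep CARD('d) \<theta> i j * y $ ej j)
      = (\<Sum>j = 1..CARD('d). wP ep CARD('d) \<theta> i (inv_into {1..CARD('d)} ej (ej j)) * y $ ej j)"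
    using bij_betw_inv_into_left[OF ej] by (intro sum.cong) auto
  also have "\<dots> = (\<Sum>k\<in>UNIV. wP ep CARD('d) \<theta> i (inv_into {1..CARD('d)} ej k) * y $ k)"
    by (rule sum.reindex_bij_betw[OF ej])
  finally show ?thesis
    by (simp add: preact_def inner_vec_def)
qed

lemma nondegenerate_if_sum_indicator_eq_0:
  assumes "(\<Sum>i = 1..H. \<bar>vP ep CARD('d) H \<theta> i\<bar> *
      indicator {0} (\<bar>bP ep CARD('d) H \<theta> i\<bar> + (\<Sum>j = 1..CARD('d). \<bar>wP ep CARD('d) \<theta> i j\<bar>))) = (0::real)"
    and "i \<in> {1..H}" and "vP ep CARD('d) H \<theta> i \<noteq> 0"
  shows "bP ep CARD('d) H \<theta> i \<noteq> 0 \<or> (\<exists>j\<in>{1..CARD('d)}. wP ep CARD('d) \<theta> i j \<noteq> 0)"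
proof -
  have "\<bar>vP ep CARD('d) H \<theta> i\<bar> *
      indicator {0} (\<bar>bP ep CARD('d) H \<theta> i\<bar> + (\<Sum>j = 1..CARD('d). \<bar>wP ep CARD('d) \<theta> i j\<bar>)) = (0::real)"
    using assms(1,2) by (subst (asm) sum_nonneg_eq_0_iff) (auto simp: indicator_def)
  then have "\<bar>bP ep CARD('d) H \<theta> i\<bar> + (\<Sum>j = 1..CARD('d). \<bar>wP ep CARD('d) \<theta> i j\<bar>) \<noteq> 0"
    using assms(3) by (auto simp: indicator_def)
  then show ?thesis
    by (metis (no_types, lifting) abs_zero add_0 sum.neutral)
qed

end

locale risk_setting = shallow_net ep ej H
  for ep :: "nat \<Rightarrow> 'p::finite" and ej :: "nat \<Rightarrow> 'd::finite" and H :: nat +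
  fixes a b :: real and f :: "real^'d \<Rightarrow> real" and \<mu> :: "(real^'d) measure" and Z :: real
  assumes continuous_f: "continuous_on (cube a b) f"
    and finite_\<mu>: "finite_measure \<mu>"
    and sets_\<mu>: "sets \<mu> = sets (restrict_space borel (cube a b))"
    and abs_preact_le_scale: "\<And>h i y. y \<in> cube a b \<Longrightarrow> \<bar>preact h i y\<bar> \<le> Z * norm h"
begin

definition loss :: "(real \<Rightarrow> real) \<Rightarrow> real^'p \<Rightarrow> real^'d \<Rightarrow> real" where
  "loss act \<theta> y = (f y - netA act ep ej H \<theta> y)\<^sup>2"

definition loss_deriv :: "(real \<Rightarrow> real) \<Rightarrow> (real \<Rightarrow> real) \<Rightarrow> real^'p \<Rightarrow> real^'d \<Rightarrow> real^'p \<Rightarrow> real" where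
  "loss_deriv act act' \<theta> y h = 2 * (netA act ep ej H \<theta> y - f y) * net_deriv act act' \<theta> y h"

definition risk_grad :: "(real \<Rightarrow> real) \<Rightarrow> (real \<Rightarrow> real) \<Rightarrow> real^'p \<Rightarrow> real^'p" where
  "risk_grad act act' \<theta> = (\<chi> k. \<integral>y. loss_deriv act act' \<theta> y (axis k 1) \<partial>\<mu>)"

definition preact_radius :: "real^'p \<Rightarrow> real" where
  "preact_radius \<theta> = Z * (norm \<theta> + 1)"

lemma riskA_eq: "riskA act ep ej H f \<mu> \<theta> = (\<integral>y. loss act \<theta> y \<partial>\<mu>)"
  unfolding riskA_def loss_def ..

lemma space_\<mu>: "space \<mu> = cube a b"
  using sets_eq_imp_space_eq[OF sets_\<mu>] by (simp add: space_restrict_space)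

lemma borel_measurable_continuous_on_cube:
  fixes g :: "real^'d \<Rightarrow> real"
  assumes "continuous_on (cube a b) g"
  shows "g \<in> borel_measurable \<mu>"
  unfolding measurable_cong_sets[OF sets_\<mu> refl] by (rule borel_measurable_continuous_on_restrict[OF assms])

lemma integrable_continuous_on_cube:
  fixes g :: "real^'d \<Rightarrow> real"
  assumes "continuous_on (cube a b) g"
  shows "integrable \<mu> g"
proof -
  interpret finite_measure \<mu> by (rule finite_\<mu>)
  obtain B where "\<And>y. y \<in> cube a b \<Longrightarrow> \<bar>g y\<bar> \<le> B"
    using bounded_on_cube[OF assms] by blast
  then show ?thesis
    by (intro integrable_const_bound[where B=B] borel_measurable_continuous_on_cube assms)
      (auto simp: space_\<mu>)
qed

lemma continuous_on_netA:
  assumes "continuous_on UNIV act"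
  shows "continuous_on S (\<lambda>y. netA act ep ej H \<theta> y)"
  unfolding netA_eq preact_def
  by (intro continuous_intros continuous_on_compose2[OF assms]) auto

lemma continuous_on_loss:
  assumes "continuous_on UNIV act"
  shows "continuous_on (cube a b) (loss act \<theta>)"
  unfolding loss_def[abs_def] by (intro continuous_intros continuous_f continuous_on_netA assms)

lemma borel_measurable_loss_deriv:
  assumes "continuous_on UNIV act" and "act' \<in> borel_measurable borel"
  shows "(\<lambda>y. loss_deriv act act' \<theta> y h) \<in> borel_measurable \<mu>"
proof -
  have preact: "(\<lambda>y. preact t i y) \<in> borel_measurable \<mu>" for t i
    unfolding preact_def by (intro borel_measurable_continuous_on_cube continuous_intros)
  have "(\<lambda>y. act (preact \<theta> i y)) \<in> borel_measurable \<mu>" "(\<lambda>y. act' (preact \<theta> i y)) \<in> borel_measurable \<mu>" for i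
    using measurable_compose[OF preact borel_measurable_continuous_onI[OF assms(1)]]
      measurable_compose[OF preact assms(2)] by auto
  moreover have "(\<lambda>y. netA act ep ej H \<theta> y - f y) \<in> borel_measurable \<mu>"
    by (intro borel_measurable_continuous_on_cube continuous_intros continuous_on_netA assms(1) continuous_f)
  ultimately show ?thesis
    unfolding loss_deriv_def net_deriv_def
    by (intro borel_measurable_times borel_measurable_add borel_measurable_sum borel_measurable_const preact)
qed

lemma bounded_linear_loss_deriv: "bounded_linear (loss_deriv act act' \<theta> y)"
  unfolding loss_deriv_def[abs_def]
  by (rule bounded_linear_compose[OF bounded_linear_mult_right bounded_linear_net_deriv])

lemma loss_has_derivative:
  assumes "\<And>i. i \<in> {1..H} \<Longrightarrow> (act has_real_derivative act' (preact \<theta> i y)) (at (preact \<theta> i y))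
      \<or> vP ep CARD('d) H \<theta> i = 0 \<and> isCont act (preact \<theta> i y)"
  shows "((\<lambda>t. loss act t y) has_derivative loss_deriv act act' \<theta> y) (at \<theta>)"
proof -
  have "((\<lambda>t. (f y - netA act ep ej H t y) ^ 2) has_derivative
      (\<lambda>h. of_nat 2 * (0 - net_deriv act act' \<theta> y h) * (f y - netA act ep ej H \<theta> y) ^ (2 - 1))) (at \<theta>)"
    by (intro has_derivative_power has_derivative_diff has_derivative_const netA_has_derivative assms)
  then show ?thesis
    unfolding loss_def[abs_def] loss_deriv_def[abs_def] by (simp add: algebra_simps)
qed

lemma abs_preact_le_radius:
  assumes "y \<in> cube a b" and "t \<in> cball \<theta> 1"
  shows "\<bar>preact t i y\<bar> \<le> preact_radius \<theta>"
proof -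
  have "norm t \<le> norm \<theta> + 1"
    using assms(2) norm_triangle_sub[of t \<theta>] by (simp add: dist_norm norm_minus_commute)
  have "0 \<le> Z"
    using order_trans[OF abs_ge_zero abs_preact_le_scale[OF assms(1), of "axis k 1" i]] by simp
  have "\<bar>preact t i y\<bar> \<le> Z * norm t"
    by (rule abs_preact_le_scale[OF assms(1)])
  also have "\<dots> \<le> preact_radius \<theta>"
    unfolding preact_radius_def using \<open>norm t \<le> norm \<theta> + 1\<close> \<open>0 \<le> Z\<close> by (rule mult_left_mono)
  finally show ?thesis .
qed

lemma abs_netA_le_near:
  assumes act: "bounded_activation (preact_radius \<theta>) A C act act'"
  obtains N where "\<And>t (y::real^'d). t \<in> ball \<theta> 1 \<Longrightarrow> y \<in> cube a b \<Longrightarrow> \<bar>netA act ep ej H t y\<bar> \<le> N"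
proof
  fix t and y :: "real^'d" assume t: "t \<in> ball \<theta> 1" and y: "y \<in> cube a b"
  have "0 \<le> A"
    using bounded_activation_nonneg[OF act order_trans[OF abs_ge_zero abs_preact_le_radius[OF y, of \<theta>]]] by simp
  have "norm t \<le> norm \<theta> + 1"
    using t norm_triangle_sub[of t \<theta>] by (simp add: dist_norm norm_minus_commute)
  have "\<bar>netA act ep ej H t y\<bar> \<le> (1 + real H * A) * norm t"
    using t y by (intro abs_netA_le[OF act] abs_preact_le_radius) auto
  also have "\<dots> \<le> (1 + real H * A) * (norm \<theta> + 1)"
    using \<open>0 \<le> A\<close> \<open>norm t \<le> norm \<theta> + 1\<close> by (intro mult_left_mono) auto
  finally show "\<bar>netA act ep ej H t y\<bar> \<le> (1 + real H * A) * (norm \<theta> + 1)" .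
qed

lemma netA_lipschitz_near:
  assumes act: "bounded_activation (preact_radius \<theta>) A C act act'"
  obtains L where "\<And>t (y::real^'d). t \<in> ball \<theta> 1 \<Longrightarrow> y \<in> cube a b \<Longrightarrow>
    \<bar>netA act ep ej H t y - netA act ep ej H \<theta> y\<bar> \<le> L * norm (t - \<theta>)"
proof
  fix t and y :: "real^'d" assume t: "t \<in> ball \<theta> 1" and y: "y \<in> cube a b"
  show "\<bar>netA act ep ej H t y - netA act ep ej H \<theta> y\<bar>
      \<le> (1 + real H * (A + norm \<theta> * C * Z)) * norm (t - \<theta>)"
    using t y by (intro netA_lipschitz[OF act] abs_preact_le_radius abs_preact_le_scale) auto
qed

lemma loss_lipschitz_near:
  assumes act: "bounded_activation (preact_radius \<theta>) A C act act'"
  obtains K where "\<And>t (y::real^'d). t \<in> ball \<theta> 1 \<Longrightarrow> y \<in> cube a b \<Longrightarrow>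
    \<bar>loss act t y - loss act \<theta> y\<bar> \<le> K * norm (t - \<theta>)"
proof -
  obtain F where F: "\<And>y. y \<in> cube a b \<Longrightarrow> \<bar>f y\<bar> \<le> F"
    using bounded_on_cube[OF continuous_f] by blast
  obtain N where N: "\<And>t (y::real^'d). t \<in> ball \<theta> 1 \<Longrightarrow> y \<in> cube a b \<Longrightarrow> \<bar>netA act ep ej H t y\<bar> \<le> N"
    using abs_netA_le_near[OF act] by blast
  obtain L where L: "\<And>t (y::real^'d). t \<in> ball \<theta> 1 \<Longrightarrow> y \<in> cube a b \<Longrightarrow>
      \<bar>netA act ep ej H t y - netA act ep ej H \<theta> y\<bar> \<le> L * norm (t - \<theta>)"
    using netA_lipschitz_near[OF act] by blast
  have "\<bar>loss act t y - loss act \<theta> y\<bar> \<le> L * (2 * F + N + N) * norm (t - \<theta>)"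
    if t: "t \<in> ball \<theta> 1" and y: "y \<in> cube a b" for t y
  proof -
    have "\<bar>loss act t y - loss act \<theta> y\<bar>
        \<le> \<bar>netA act ep ej H t y - netA act ep ej H \<theta> y\<bar>
          * (2 * \<bar>f y\<bar> + \<bar>netA act ep ej H t y\<bar> + \<bar>netA act ep ej H \<theta> y\<bar>)"
      unfolding loss_def by (rule abs_square_diff_le)
    also have "\<dots> \<le> L * norm (t - \<theta>) * (2 * F + N + N)"
      using F[OF y] N[OF t y] N[of \<theta> y] y L[OF t y] order_trans[OF abs_ge_zero L[OF t y]]
      by (intro mult_mono add_mono) auto
    finally show ?thesis
      by (simp add: mult_ac)
  qed
  then show ?thesis
    by (rule that)
qed

lemma loss_deriv_uniform_bound:
  "\<exists>B. \<forall>act act' y h. bounded_activation (preact_radius \<theta>) A C act act' \<longrightarrow> y \<in> cube a b \<longrightarrow>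
     \<bar>loss_deriv act act' \<theta> y h\<bar> \<le> B * norm h"
proof -
  obtain F where F: "\<And>y. y \<in> cube a b \<Longrightarrow> \<bar>f y\<bar> \<le> F"
    using bounded_on_cube[OF continuous_f] by blast
  have "\<bar>loss_deriv act act' \<theta> y h\<bar>
      \<le> (2 * ((1 + real H * A) * norm \<theta> + F) * (1 + real H * (A + norm \<theta> * C * Z))) * norm h"
    if act: "bounded_activation (preact_radius \<theta>) A C act act'" and y: "y \<in> cube a b" for act act' y h
  proof -
    have preact_\<theta>: "\<bar>preact \<theta> i y\<bar> \<le> preact_radius \<theta>" for i
      using y by (auto intro: abs_preact_le_radius)
    have net: "\<bar>netA act ep ej H \<theta> y - f y\<bar> \<le> (1 + real H * A) * norm \<theta> + F"
      using abs_netA_le[OF act preact_\<theta>] F[OF y] by linarith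
    have deriv: "\<bar>net_deriv act act' \<theta> y h\<bar> \<le> (1 + real H * (A + norm \<theta> * C * Z)) * norm h"
      by (intro abs_net_deriv_le[OF act preact_\<theta>] abs_preact_le_scale y)
    have "\<bar>loss_deriv act act' \<theta> y h\<bar>
        = 2 * (\<bar>netA act ep ej H \<theta> y - f y\<bar> * \<bar>net_deriv act act' \<theta> y h\<bar>)"
      unfolding loss_deriv_def abs_mult by (simp add: mult.assoc)
    also have "\<dots> \<le> 2 * (((1 + real H * A) * norm \<theta> + F) * ((1 + real H * (A + norm \<theta> * C * Z)) * norm h))"
      using mult_mono[OF net deriv] order_trans[OF abs_ge_zero net] by simp
    finally show ?thesis
      by (simp only: mult.assoc)
  qed
  then show ?thesis
    by blast
qed

lemma riskA_has_derivative:
  assumes act: "bounded_activation (preact_radius \<theta>) A C act act'"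
    and "continuous_on UNIV act" and "act' \<in> borel_measurable borel"
    and AE_deriv: "AE y in \<mu>. ((\<lambda>t. loss act t y) has_derivative loss_deriv act act' \<theta> y) (at \<theta>)"
  shows "(riskA act ep ej H f \<mu> has_derivative (\<lambda>h. risk_grad act act' \<theta> \<bullet> h)) (at \<theta>)"
proof -
  obtain K where K: "\<And>t (y::real^'d). t \<in> ball \<theta> 1 \<Longrightarrow> y \<in> cube a b \<Longrightarrow>
      \<bar>loss act t y - loss act \<theta> y\<bar> \<le> K * norm (t - \<theta>)"
    using loss_lipschitz_near[OF act] by blast
  obtain B where B: "\<And>y h. y \<in> cube a b \<Longrightarrow> \<bar>loss_deriv act act' \<theta> y h\<bar> \<le> B * norm h"
    using loss_deriv_uniform_bound[of \<theta> A C] act by blast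
  have "((\<lambda>t. \<integral>y. loss act t y \<partial>\<mu>) has_derivative (\<lambda>h. \<integral>y. loss_deriv act act' \<theta> y h \<partial>\<mu>)) (at \<theta>)"
  proof (rule has_derivative_integral_AE[OF finite_\<mu>])
    show "loss act t \<in> borel_measurable \<mu>" for t
      by (intro borel_measurable_continuous_on_cube continuous_on_loss assms(2))
    show "integrable \<mu> (loss act \<theta>)"
      by (intro integrable_continuous_on_cube continuous_on_loss assms(2))
    show "(\<lambda>y. loss_deriv act act' \<theta> y h) \<in> borel_measurable \<mu>" for h
      by (rule borel_measurable_loss_deriv[OF assms(2,3)])
    show "linear (loss_deriv act act' \<theta> y)" for y
      by (rule bounded_linear.linear[OF bounded_linear_loss_deriv])
    show "\<bar>loss_deriv act act' \<theta> y h\<bar> \<le> B * norm h" if "y \<in> space \<mu>" for y h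
      using B that by (simp add: space_\<mu>)
    show "\<bar>loss act t y - loss act \<theta> y\<bar> \<le> K * norm (t - \<theta>)" if "t \<in> ball \<theta> 1" "y \<in> space \<mu>" for t y
      using K that by (simp add: space_\<mu>)
  qed (simp_all add: AE_deriv)
  moreover have "(\<lambda>h. \<integral>y. loss_deriv act act' \<theta> y h \<partial>\<mu>) = (\<lambda>h. risk_grad act act' \<theta> \<bullet> h)"
  proof
    fix h
    show "(\<integral>y. loss_deriv act act' \<theta> y h \<partial>\<mu>) = risk_grad act act' \<theta> \<bullet> h"
      unfolding risk_grad_def
      by (rule linear_eq_inner_axis[OF bounded_linear.linear[OF has_derivative_bounded_linear[OF calculation]]])
  qed
  ultimately show ?thesis
    unfolding riskA_eq[abs_def] by simp
qed

lemma AE_loss_has_derivative_if_riskA_eq_0: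
  assumes act: "bounded_activation (preact_radius \<theta>) A C act act'"
    and "continuous_on UNIV act" and "riskA act ep ej H f \<mu> \<theta> = 0"
  shows "AE y in \<mu>. ((\<lambda>t. loss act t y) has_derivative loss_deriv act act' \<theta> y) (at \<theta>)"
proof -
  obtain L where L: "\<And>t (y::real^'d). t \<in> ball \<theta> 1 \<Longrightarrow> y \<in> cube a b \<Longrightarrow>
      \<bar>netA act ep ej H t y - netA act ep ej H \<theta> y\<bar> \<le> L * norm (t - \<theta>)"
    using netA_lipschitz_near[OF act] by blast
  have "AE y in \<mu>. 0 \<le> loss act \<theta> y"
    by (simp add: loss_def)
  from integral_nonneg_eq_0_iff_AE[OF integrable_continuous_on_cube[OF continuous_on_loss[OF assms(2)]] this]
  have "AE y in \<mu>. loss act \<theta> y = 0"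
    using assms(3) by (simp add: riskA_eq)
  with AE_space show ?thesis
  proof eventually_elim
    case (elim y)
    then have fit: "f y = netA act ep ej H \<theta> y"
      by (simp add: loss_def)
    have "((\<lambda>t. loss act t y) has_derivative (\<lambda>h. 0)) (at \<theta>)"
    proof (rule has_derivative_zero_if_quadratic_bound[OF zero_less_one])
      fix t assume "t \<in> ball \<theta> 1"
      then have "\<bar>netA act ep ej H \<theta> y - netA act ep ej H t y\<bar>\<^sup>2 \<le> (L * norm (t - \<theta>))\<^sup>2"
        using L[of t y] elim by (intro power_mono) (auto simp: space_\<mu> abs_minus_commute)
      then show "\<bar>loss act t y\<bar> \<le> L\<^sup>2 * (norm (t - \<theta>))\<^sup>2"
        by (simp add: loss_def fit power_mult_distrib)
    qed
    moreover have "loss_deriv act act' \<theta> y = (\<lambda>h. 0)"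
      by (simp add: fun_eq_iff loss_deriv_def fit)
    ultimately show ?case
      by simp
  qed
qed

lemma AE_relu_loss_has_derivative:
  assumes ej: "bij_betw ej {1..CARD('d)} UNIV"
    and ac: "absolutely_continuous (restrict_space lborel (cube a b)) \<mu>"
    and nondegenerate: "\<And>i. i \<in> {1..H} \<Longrightarrow> vP ep CARD('d) H \<theta> i \<noteq> 0 \<Longrightarrow>
       bP ep CARD('d) H \<theta> i \<noteq> 0 \<or> (\<exists>j\<in>{1..CARD('d)}. wP ep CARD('d) \<theta> i j \<noteq> 0)"
  shows "AE y in \<mu>. ((\<lambda>t. loss (\<lambda>s. max s 0) t y) has_derivative
    loss_deriv (\<lambda>s. max s 0) (indicator {0<..}) \<theta> y) (at \<theta>)"
proof -
  have relu_continuous: "isCont (\<lambda>s::real. max s 0) z" for z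
    by (intro continuous_intros)
  have "AE y in \<mu>. preact \<theta> i y \<noteq> 0" if i: "i \<in> {1..H}" and v: "vP ep CARD('d) H \<theta> i \<noteq> 0" for i
  proof -
    define u where "u = (\<chi> k. wP ep CARD('d) \<theta> i (inv_into {1..CARD('d)} ej k))"
    have "u $ ej j = wP ep CARD('d) \<theta> i j" if "j \<in> {1..CARD('d)}" for j
      using bij_betw_inv_into_left[OF ej that] by (simp add: u_def)
    then have "u \<noteq> 0 \<or> - bP ep CARD('d) H \<theta> i \<noteq> 0"
      using nondegenerate[OF i v] by auto
    from AE_not_in_hyperplane[OF sets_\<mu> _ ac this]
    have "AE y in \<mu>. u \<bullet> y \<noteq> - bP ep CARD('d) H \<theta> i"
      by (simp add: cube_def borel_closed)
    then show ?thesis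
      by eventually_elim (auto simp: preact_eq_inner[OF ej] u_def)
  qed
  then have "AE y in \<mu>. \<forall>i\<in>{1..H}. vP ep CARD('d) H \<theta> i = 0 \<or> preact \<theta> i y \<noteq> 0"
    by (intro AE_finite_allI) auto
  then show ?thesis
    by eventually_elim (intro loss_has_derivative, use relu_has_real_derivative relu_continuous in blast)
qed

lemma risk_grad_tendsto:
  fixes act act' :: "nat \<Rightarrow> real \<Rightarrow> real"
  assumes bounded: "\<And>r. bounded_activation (preact_radius \<theta>) A C (act r) (act' r)"
    and continuous: "\<And>r. continuous_on UNIV (act r)" and measurable: "\<And>r. act' r \<in> borel_measurable borel"
    and lim: "\<And>s. (\<lambda>r. act r s) \<longlonglongrightarrow> \<alpha> s" "\<And>s. (\<lambda>r. act' r s) \<longlonglongrightarrow> \<alpha>' s"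
  shows "(\<lambda>r. risk_grad (act r) (act' r) \<theta>) \<longlonglongrightarrow> risk_grad \<alpha> \<alpha>' \<theta>"
proof (rule vec_tendstoI)
  fix k
  obtain B where B: "\<And>r y. y \<in> cube a b \<Longrightarrow>
      \<bar>loss_deriv (act r) (act' r) \<theta> y (axis k 1)\<bar> \<le> B * norm (axis k (1::real))"
    using loss_deriv_uniform_bound[of \<theta> A C] bounded by blast
  have pointwise: "(\<lambda>r. loss_deriv (act r) (act' r) \<theta> y (axis k 1)) \<longlonglongrightarrow> loss_deriv \<alpha> \<alpha>' \<theta> y (axis k 1)" for y
    unfolding loss_deriv_def net_deriv_def netA_eq by (intro tendsto_intros lim)
  have "(\<lambda>r. \<integral>y. loss_deriv (act r) (act' r) \<theta> y (axis k 1) \<partial>\<mu>) \<longlonglongrightarrow> (\<integral>y. loss_deriv \<alpha> \<alpha>' \<theta> y (axis k 1) \<partial>\<mu>)"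
  proof (rule integral_dominated_convergence[where w="\<lambda>_. B * norm (axis k (1::real))"])
    show "(\<lambda>y. loss_deriv (act r) (act' r) \<theta> y (axis k 1)) \<in> borel_measurable \<mu>" for r
      by (rule borel_measurable_loss_deriv[OF continuous measurable])
    then show "(\<lambda>y. loss_deriv \<alpha> \<alpha>' \<theta> y (axis k 1)) \<in> borel_measurable \<mu>"
      by (rule borel_measurable_LIMSEQ_real[OF pointwise])
    show "integrable \<mu> (\<lambda>_. B * norm (axis k (1::real)))"
      by (rule finite_measure.integrable_const[OF finite_\<mu>])
    show "AE y in \<mu>. norm (loss_deriv (act r) (act' r) \<theta> y (axis k 1)) \<le> B * norm (axis k (1::real))" for r
      using B by (intro AE_I2) (simp add: space_\<mu>)
    show "AE y in \<mu>. (\<lambda>r. loss_deriv (act r) (act' r) \<theta> y (axis k 1)) \<longlonglongrightarrow> loss_deriv \<alpha> \<alpha>' \<theta> y (axis k 1)"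
      using pointwise by simp
  qed
  then show "(\<lambda>r. risk_grad (act r) (act' r) \<theta> $ k) \<longlonglongrightarrow> risk_grad \<alpha> \<alpha>' \<theta> $ k"
    by (simp add: risk_grad_def)
qed

lemma riskA_has_derivative_smooth:
  assumes act: "bounded_activation (preact_radius \<theta>) A C act act'"
    and deriv: "\<And>s. (act has_real_derivative act' s) (at s)" and "continuous_on UNIV act'"
  shows "(riskA act ep ej H f \<mu> has_derivative (\<lambda>h. risk_grad act act' \<theta> \<bullet> h)) (at \<theta>)"
proof (rule riskA_has_derivative[OF act])
  show "continuous_on UNIV act"
    using deriv by (intro continuous_at_imp_continuous_on) (blast intro: DERIV_isCont)
  show "act' \<in> borel_measurable borel"
    by (rule borel_measurable_continuous_onI) fact
  show "AE y in \<mu>. ((\<lambda>t. loss act t y) has_derivative loss_deriv act act' \<theta> y) (at \<theta>)"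
    using deriv by (intro AE_I2 loss_has_derivative) blast
qed

lemma smoothed_riskA_has_derivative:
  fixes R :: "nat \<Rightarrow> real \<Rightarrow> real"
  assumes R_C1: "\<forall>r\<ge>1. (\<forall>x. R r differentiable (at x)) \<and> continuous_on UNIV (deriv (R r))"
    and R_lim: "\<forall>x. ((\<lambda>r. \<bar>R r x - max x 0\<bar> + \<bar>deriv (R r) x - indicator {0<..} x\<bar>) \<longlongrightarrow> 0) sequentially"
    and R_bd: "\<forall>x. \<exists>C. \<forall>r\<ge>1. \<forall>y\<in>{-\<bar>x\<bar>..\<bar>x\<bar>}. \<bar>deriv (R r) y\<bar> \<le> C"
  shows "\<And>r. r \<ge> 1 \<Longrightarrow> (riskA (R r) ep ej H f \<mu> has_derivative (\<lambda>h. risk_grad (R r) (deriv (R r)) \<theta> \<bullet> h)) (at \<theta>)"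
    and "(\<lambda>r. risk_grad (R r) (deriv (R r)) \<theta>) \<longlonglongrightarrow> risk_grad (\<lambda>s. max s 0) (indicator {0<..}) \<theta>"
proof -
  \<comment> \<open>the hypotheses on R only concern r \<ge> 1\<close>
  define S where "S r = R (Suc r)" for r
  have S_deriv: "(S r has_real_derivative deriv (S r) s) (at s)" for r s
    using R_C1 by (simp add: S_def DERIV_deriv_iff_real_differentiable)
  have S'_continuous: "continuous_on UNIV (deriv (S r))" for r
    using R_C1 by (simp add: S_def)
  have S_lim: "(\<lambda>r. S r s) \<longlonglongrightarrow> max s 0" "(\<lambda>r. deriv (S r) s) \<longlonglongrightarrow> indicator {0<..} s" for s
    using tendsto_of_sum_abs_tendsto_0[OF LIMSEQ_Suc[OF R_lim[rule_format, of s]]] by (simp_all add: S_def)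
  obtain C where "\<And>r s. \<bar>s\<bar> \<le> preact_radius \<theta> \<Longrightarrow> \<bar>deriv (S r) s\<bar> \<le> C"
    using R_bd[rule_format, of "preact_radius \<theta>"] by (fastforce simp: S_def)
  then obtain A where S_bounded: "\<And>r. bounded_activation (preact_radius \<theta>) A C (S r) (deriv (S r))"
    using bounded_activation_family[where act=S and act'="\<lambda>r. deriv (S r)", OF S_deriv]
      convergentI[OF S_lim(1)] by blast
  show "(riskA (R r) ep ej H f \<mu> has_derivative (\<lambda>h. risk_grad (R r) (deriv (R r)) \<theta> \<bullet> h)) (at \<theta>)"
    if "r \<ge> 1" for r
    using riskA_has_derivative_smooth[OF S_bounded S_deriv S'_continuous, of "r - 1"] that
    by (simp add: S_def)
  have "(\<lambda>r. risk_grad (S r) (deriv (S r)) \<theta>) \<longlonglongrightarrow> risk_grad (\<lambda>s. max s 0) (indicator {0<..}) \<theta>"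
    using S_deriv
    by (intro risk_grad_tendsto[OF S_bounded _ borel_measurable_continuous_onI[OF S'_continuous] S_lim]
        continuous_at_imp_continuous_on) (blast intro: DERIV_isCont)
  then show "(\<lambda>r. risk_grad (R r) (deriv (R r)) \<theta>) \<longlonglongrightarrow> risk_grad (\<lambda>s. max s 0) (indicator {0<..}) \<theta>"
    unfolding S_def by (rule LIMSEQ_imp_Suc)
qed

lemma riskA_relu_has_derivative:
  assumes ej: "bij_betw ej {1..CARD('d)} UNIV"
    and ac: "absolutely_continuous (restrict_space lborel (cube a b)) \<mu>"
    and critical: "riskA (\<lambda>s. max s 0) ep ej H f \<mu> \<theta> *
      (\<Sum>i = 1..H. \<bar>vP ep CARD('d) H \<theta> i\<bar> *
        indicator {0} (\<bar>bP ep CARD('d) H \<theta> i\<bar> + (\<Sum>j = 1..CARD('d). \<bar>wP ep CARD('d) \<theta> i j\<bar>))) = 0"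
  shows "(riskA (\<lambda>s. max s 0) ep ej H f \<mu> has_derivative
      (\<lambda>h. risk_grad (\<lambda>s. max s 0) (indicator {0<..}) \<theta> \<bullet> h)) (at \<theta>)"
proof -
  have relu_continuous: "continuous_on UNIV (\<lambda>s::real. max s 0)"
    by (intro continuous_intros)
  have "AE y in \<mu>. ((\<lambda>t. loss (\<lambda>s. max s 0) t y) has_derivative
      loss_deriv (\<lambda>s. max s 0) (indicator {0<..}) \<theta> y) (at \<theta>)"
  proof (cases "riskA (\<lambda>s. max s 0) ep ej H f \<mu> \<theta> = 0")
    case True
    then show ?thesis
      by (rule AE_loss_has_derivative_if_riskA_eq_0[OF bounded_activation_relu relu_continuous])
  next
    case False
    then show ?thesis
      using critical by (intro AE_relu_loss_has_derivative[OF ej ac] nondegenerate_if_sum_indicator_eq_0) auto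
  qed
  then show ?thesis
    by (intro riskA_has_derivative[OF bounded_activation_relu relu_continuous] borel_measurable_indicator)
      simp_all
qed

end

theorem proposition2p11:
  fixes H :: nat and a b :: real
    and f :: "real^'d \<Rightarrow> real"
    and ep :: "nat \<Rightarrow> 'p::finite" and ej :: "nat \<Rightarrow> 'd::finite"
    and R :: "nat \<Rightarrow> real \<Rightarrow> real"
    and \<mu> :: "(real^'d) measure"
    and G :: "real^'p \<Rightarrow> real^'p"
    and \<theta> :: "real^'p"
  assumes H: "H \<ge> 1"
    and dimp: "CARD('p) = CARD('d) * H + 2 * H + 1"
    and ep: "bij_betw ep {1..CARD('d) * H + 2 * H + 1} UNIV"
    and ej: "bij_betw ej {1..CARD('d)} UNIV"
    and ab: "a < b"
    and f: "continuous_on (cube a b) f"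
    and R_C1: "\<forall>r\<ge>1. (\<forall>x. R r differentiable (at x)) \<and> continuous_on UNIV (deriv (R r))"
    and R_lim: "\<forall>x. ((\<lambda>r. \<bar>R r x - max x 0\<bar> + \<bar>deriv (R r) x - indicator {0<..} x\<bar>)
                      \<longlongrightarrow> 0) sequentially"
    and R_bd: "\<forall>x. \<exists>C. \<forall>r\<ge>1. \<forall>y\<in>{-\<bar>x\<bar>..\<bar>x\<bar>}. \<bar>deriv (R r) y\<bar> \<le> C"
    and mu_fin: "finite_measure \<mu>"
    and mu_sets: "sets \<mu> = sets (restrict_space borel (cube a b))"
    and mu_ac: "absolutely_continuous (restrict_space lborel (cube a b)) \<mu>"
    and G: "\<forall>\<theta>' g v. (\<forall>r\<ge>1. (riskA (R r) ep ej H f \<mu> has_derivative (\<lambda>h. g r \<bullet> h)) (at \<theta>'))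
               \<longrightarrow> (g \<longlongrightarrow> v) sequentially \<longrightarrow> G \<theta>' = v"
    and hyp: "riskA (\<lambda>t. max t 0) ep ej H f \<mu> \<theta> *
              (\<Sum>i = 1..H. \<bar>vP ep CARD('d) H \<theta> i\<bar> *
                 indicator {0} (\<bar>bP ep CARD('d) H \<theta> i\<bar>
                   + (\<Sum>j = 1..CARD('d). \<bar>wP ep CARD('d) \<theta> i j\<bar>))) = 0"
  shows "(riskA (\<lambda>t. max t 0) ep ej H f \<mu> has_derivative (\<lambda>h. G \<theta> \<bullet> h)) (at \<theta>)"
proof -
  interpret risk_setting ep ej H a b f \<mu> "1 + real CARD('d) * (\<bar>a\<bar> + \<bar>b\<bar>)"
    by (intro risk_setting.intro f mu_fin mu_sets shallow_net.abs_preact_le abs_component_le_cube)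
  have "G \<theta> = risk_grad (\<lambda>s. max s 0) (indicator {0<..}) \<theta>"
    using smoothed_riskA_has_derivative(1)[OF R_C1 R_lim R_bd]
    by (intro G[rule_format, OF _ smoothed_riskA_has_derivative(2)[OF R_C1 R_lim R_bd]]) blast
  then show ?thesis
    using riskA_relu_has_derivative[OF ej mu_ac hyp] by simp
qed

end
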